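(* For every sequent $\Gamma\Rightarrow\Delta$: if $\mathsf{Grz_{Seq}}+\mathsf{cut}\vdash\Gamma\Rightarrow\Delta$, then $\Gamma\Rightarrow\Delta$ is provable in $\mathsf{Grz}_\infty+\mathsf{cut}$.
   Context: Formulas are built from $\bot$ and atomic propositions using $\to$ and $\Box$. A sequent is $\Gamma\Rightarrow\Delta$ with $\Gamma,\Delta$ finite multisets of formulas; $\Box\Pi$ denotes the multiset $\{\Box B:B\in\Pi\}$. Common rules: $(\to_L)$ from $\Gamma,B\Rightarrow\Delta$ and $\Gamma\Rightarrow A,\Delta$ infer $\Gamma,A\to B\Rightarrow\Delta$; $(\to_R)$ from $\Gamma,A\Rightarrow B,\Delta$ infer $\Gamma\Rightarrow A\to B,\Delta$; $(\mathsf{refl})$ from $\Gamma,B,\Box B\Rightarrow\Delta$ infer $\Gamma,\Box B\Rightarrow\Delta$; $(\mathsf{cut})$ from $\Gamma\Rightarrow A,\Delta$ and $\Gamma,A\Rightarrow\Delta$ infer $\Gamma\Rightarrow\Delta$. The finite-proof calculus $\mathsf{Grz_{Seq}}+\mathsf{cut}$ has initial sequents $\Gamma,A\Rightarrow A,\Delta$ (any $A$) and $\Gamma,\bot\Rightarrow\Delta$, the rules $(\to_L),(\to_R),(\mathsf{refl}),(\mathsf{cut})$ and $(\Box_{\mathsf{Grz}})$: from $\Box\Pi,\Box(A\to\Box A)\Rightarrow A$ infer $\Gamma,\Box\Pi\Rightarrow\Box A,\Delta$. The calculus $\mathsf{Grz}_\infty+\mathsf{cut}$ has initial sequents $\Gamma,p\Rightarrow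 p,\Delta$ ($p$ atomic) and $\Gamma,\bot\Rightarrow\Delta$, the rules $(\to_L),(\to_R),(\mathsf{refl}),(\mathsf{cut})$ and $(\Box)$: from left premise $\Gamma,\Box\Pi\Rightarrow A,\Delta$ and right premise $\Box\Pi\Rightarrow A$ infer $\Gamma,\Box\Pi\Rightarrow\Box A,\Delta$. Proofs in $\mathsf{Grz}_\infty+\mathsf{cut}$ are $\infty$-proofs: possibly infinite trees of sequents built by these rules, with leaves labelled by initial sequents, in which every infinite branch passes through a right premise of $(\Box)$ infinitely often; a sequent is provable if it labels the root of an $\infty$-proof. *)

theory Defs
  imports Main "HOL-Library.Multiset"
begin

datatype fm = Bot | Atom nat | Imp fm fm | Box fm

type_synonym sequent = "fm multiset \<times> fm multiset"

inductive grz_seq :: "fm multiset \<Rightarrow> fm multiset \<Rightarrow> bool" where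
  ax:    "grz_seq (\<Gamma> + {#A#}) ({#A#} + \<Delta>)"
| botL:  "grz_seq (\<Gamma> + {#Bot#}) \<Delta>"
| impL:  "grz_seq (\<Gamma> + {#B#}) \<Delta> \<Longrightarrow> grz_seq \<Gamma> ({#A#} + \<Delta>)
          \<Longrightarrow> grz_seq (\<Gamma> + {#Imp A B#}) \<Delta>"
| impR:  "grz_seq (\<Gamma> + {#A#}) ({#B#} + \<Delta>) \<Longrightarrow> grz_seq \<Gamma> ({#Imp A B#} + \<Delta>)"
| refl:  "grz_seq (\<Gamma> + {#B#} + {#Box B#}) \<Delta> \<Longrightarrow> grz_seq (\<Gamma> + {#Box B#}) \<Delta>"
| cut:   "grz_seq \<Gamma> ({#A#} + \<Delta>) \<Longrightarrow> grz_seq (\<Gamma> + {#A#}) \<Delta> \<Longrightarrow> grz_seq \<Gamma> \<Delta>"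
| boxGrz: "grz_seq (image_mset Box \<Pi> + {#Box (Imp A (Box A))#}) {#A#}
          \<Longrightarrow> grz_seq (\<Gamma> + image_mset Box \<Pi>) ({#Box A#} + \<Delta>)"

text \<open>A possibly infinite proof tree is given by a labelling of nodes (addresses = lists of
  child indices) with sequents and with rule names.  For binary rules, child 0
  is the left premise and child 1 the right premise.\<close>

datatype rule = RAx | RBot | RImpL | RImpR | RRefl | RCut | RBox

fun arity :: "rule \<Rightarrow> nat" where
  "arity RAx = 0" | "arity RBot = 0" | "arity RImpL = 2" | "arity RImpR = 1"
| "arity RRefl = 1" | "arity RCut = 2" | "arity RBox = 2"

inductive_set nodes :: "(nat list \<Rightarrow> rule) \<Rightarrow> nat list set" for rl where
  root: "[] \<in> nodes rl"
| child: "w \<in> nodes rl \<Longrightarrow> i < arity (rl w) \<Longrightarrow> w @ [i] \<in> nodes rl"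

fun rule_ok :: "(nat list \<Rightarrow> sequent) \<Rightarrow> rule \<Rightarrow> nat list \<Rightarrow> bool" where
  "rule_ok lab RAx w = (\<exists>\<Gamma> \<Delta> p. lab w = (\<Gamma> + {#Atom p#}, {#Atom p#} + \<Delta>))"
| "rule_ok lab RBot w = (\<exists>\<Gamma> \<Delta>. lab w = (\<Gamma> + {#Bot#}, \<Delta>))"
| "rule_ok lab RImpL w = (\<exists>\<Gamma> \<Delta> A B. lab w = (\<Gamma> + {#Imp A B#}, \<Delta>)
      \<and> lab (w @ [0]) = (\<Gamma> + {#B#}, \<Delta>) \<and> lab (w @ [1]) = (\<Gamma>, {#A#} + \<Delta>))"
| "rule_ok lab RImpR w = (\<exists>\<Gamma> \<Delta> A B. lab w = (\<Gamma>, {#Imp A B#} + \<Delta>)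
      \<and> lab (w @ [0]) = (\<Gamma> + {#A#}, {#B#} + \<Delta>))"
| "rule_ok lab RRefl w = (\<exists>\<Gamma> \<Delta> B. lab w = (\<Gamma> + {#Box B#}, \<Delta>)
      \<and> lab (w @ [0]) = (\<Gamma> + {#B#} + {#Box B#}, \<Delta>))"
| "rule_ok lab RCut w = (\<exists>\<Gamma> \<Delta> A. lab w = (\<Gamma>, \<Delta>)
      \<and> lab (w @ [0]) = (\<Gamma>, {#A#} + \<Delta>) \<and> lab (w @ [1]) = (\<Gamma> + {#A#}, \<Delta>))"
| "rule_ok lab RBox w = (\<exists>\<Gamma> \<Delta> \<Pi> A. lab w = (\<Gamma> + image_mset Box \<Pi>, {#Box A#} + \<Delta>)
      \<and> lab (w @ [0]) = (\<Gamma> + image_mset Box \<Pi>, {#A#} + \<Delta>)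
      \<and> lab (w @ [1]) = (image_mset Box \<Pi>, {#A#}))"

definition is_branch :: "(nat list \<Rightarrow> rule) \<Rightarrow> (nat \<Rightarrow> nat list) \<Rightarrow> bool" where
  "is_branch rl f \<longleftrightarrow> f 0 = [] \<and> (\<forall>n. \<exists>i < arity (rl (f n)). f (Suc n) = f n @ [i])"

definition inf_proof :: "(nat list \<Rightarrow> sequent) \<Rightarrow> (nat list \<Rightarrow> rule) \<Rightarrow> bool" where
  "inf_proof lab rl \<longleftrightarrow>
     (\<forall>w \<in> nodes rl. rule_ok lab (rl w) w) \<and>
     (\<forall>f. is_branch rl f \<longrightarrow>
        (\<forall>m. \<exists>n \<ge> m. rl (f n) = RBox \<and> f (Suc n) = f n @ [1]))"

definition grz_inf_provable :: "sequent \<Rightarrow> bool" where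
  "grz_inf_provable S \<longleftrightarrow> (\<exists>lab rl. lab [] = S \<and> inf_proof lab rl)"

end

theory Submission
  imports Defs
begin

text \<open>
  A \<open>Grz\<^sub>S\<^sub>e\<^sub>q\<close> proof is turned into a finite derivation in the rules of \<open>Grz\<^sub>\<infinity>\<close> in which
  right premises of \<open>(\<box>)\<close> may be discharged by hypotheses, taken from the greatest set of
  sequents that are derivable from hypotheses in that same set.  This set is closed under the
  Grz rule: \<open>\<box>\<Pi> \<Rightarrow> A\<close> follows by a cut on \<open>\<box>(A \<rightarrow> \<box>A)\<close>, whose derivation by \<open>(\<box>)\<close> needs
  \<open>\<box>\<Pi> \<Rightarrow> A \<rightarrow> \<box>A\<close>, which in turn needs \<open>\<box>\<Pi> \<Rightarrow> A\<close> as right premise of \<open>(\<box>)\<close>, closing a cycle.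
  Unfolding the hypotheses of such derivations by their own derivations gives an \<open>\<infinity>\<close>-proof:
  every step of a branch other than into a right premise of \<open>(\<box>)\<close> moves to a proper subtree
  of a finite derivation, so such steps cannot go on forever.
\<close>

inductive grz_der :: "sequent set \<Rightarrow> fm multiset \<Rightarrow> fm multiset \<Rightarrow> bool" for X where
  ax:   "grz_der X (\<Gamma> + {#Atom p#}) ({#Atom p#} + \<Delta>)"
| botL: "grz_der X (\<Gamma> + {#Bot#}) \<Delta>"
| impL: "grz_der X (\<Gamma> + {#B#}) \<Delta> \<Longrightarrow> grz_der X \<Gamma> ({#A#} + \<Delta>)
         \<Longrightarrow> grz_der X (\<Gamma> + {#Imp A B#}) \<Delta>"
| impR: "grz_der X (\<Gamma> + {#A#}) ({#B#} + \<Delta>) \<Longrightarrow> grz_der X \<Gamma> ({#Imp A B#} + \<Delta>)"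
| refl: "grz_der X (\<Gamma> + {#B#} + {#Box B#}) \<Delta> \<Longrightarrow> grz_der X (\<Gamma> + {#Box B#}) \<Delta>"
| cut:  "grz_der X \<Gamma> ({#A#} + \<Delta>) \<Longrightarrow> grz_der X (\<Gamma> + {#A#}) \<Delta> \<Longrightarrow> grz_der X \<Gamma> \<Delta>"
| box:  "grz_der X (\<Gamma> + image_mset Box \<Pi>) ({#A#} + \<Delta>) \<Longrightarrow> (image_mset Box \<Pi>, {#A#}) \<in> X
         \<Longrightarrow> grz_der X (\<Gamma> + image_mset Box \<Pi>) ({#Box A#} + \<Delta>)"

lemma grz_der_mono: "X \<subseteq> Y \<Longrightarrow> grz_der X \<le> grz_der Y"
proof (intro le_funI le_boolI)
  fix \<Gamma> \<Delta> assume "grz_der X \<Gamma> \<Delta>" "X \<subseteq> Y"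
  then show "grz_der Y \<Gamma> \<Delta>" by (induction rule: grz_der.induct) (blast intro: grz_der.intros)+
qed

lemma grz_der_weaken: "grz_der X \<Gamma> \<Delta> \<Longrightarrow> grz_der X (\<Gamma> + \<Gamma>') (\<Delta> + \<Delta>')"
proof (induction rule: grz_der.induct)
  case (ax \<Gamma> p \<Delta>)
  show ?case using grz_der.ax[of X "\<Gamma> + \<Gamma>'" p "\<Delta> + \<Delta>'"] by (simp add: ac_simps)
next
  case (botL \<Gamma> \<Delta>)
  show ?case using grz_der.botL[of X "\<Gamma> + \<Gamma>'" "\<Delta> + \<Delta>'"] by (simp add: ac_simps)
next
  case (impL \<Gamma> B \<Delta> A)
  then show ?case using grz_der.impL[of X "\<Gamma> + \<Gamma>'" B "\<Delta> + \<Delta>'" A] by (simp add: ac_simps)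
next
  case (impR \<Gamma> A B \<Delta>)
  then show ?case using grz_der.impR[of X "\<Gamma> + \<Gamma>'" A B "\<Delta> + \<Delta>'"] by (simp add: ac_simps)
next
  case (refl \<Gamma> B \<Delta>)
  then show ?case using grz_der.refl[of X "\<Gamma> + \<Gamma>'" B "\<Delta> + \<Delta>'"] by (simp add: ac_simps add_mset_commute)
next
  case (cut \<Gamma> A \<Delta>)
  then show ?case using grz_der.cut[of X "\<Gamma> + \<Gamma>'" A "\<Delta> + \<Delta>'"] by (simp add: ac_simps)
next
  case (box \<Gamma> \<Pi> A \<Delta>)
  then show ?case using grz_der.box[of X "\<Gamma> + \<Gamma>'" \<Pi> A "\<Delta> + \<Delta>'"] by (simp add: ac_simps)
qed

coinductive_set grz_inf_der :: "sequent set" where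
  "grz_der grz_inf_der \<Gamma> \<Delta> \<Longrightarrow> (\<Gamma>, \<Delta>) \<in> grz_inf_der"
  monos grz_der_mono

lemma grz_inf_der_iff: "(\<Gamma>, \<Delta>) \<in> grz_inf_der \<longleftrightarrow> grz_der grz_inf_der \<Gamma> \<Delta>"
  by (auto elim: grz_inf_der.cases intro: grz_inf_der.intros)

lemma grz_inf_der_coinduct:
  assumes "\<And>\<Gamma> \<Delta>. (\<Gamma>, \<Delta>) \<in> Y \<Longrightarrow> grz_der (Y \<union> grz_inf_der) \<Gamma> \<Delta>"
  shows "Y \<subseteq> grz_inf_der"
proof
  fix S assume "S \<in> Y"
  moreover have "{(\<Gamma>, \<Delta>). (\<Gamma>, \<Delta>) \<in> Y \<or> (\<Gamma>, \<Delta>) \<in> grz_inf_der} = Y \<union> grz_inf_der"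
    by auto
  ultimately show "S \<in> grz_inf_der"
    using grz_inf_der.coinduct[where X = "\<lambda>\<Gamma> \<Delta>. (\<Gamma>, \<Delta>) \<in> Y"] assms
    by (metis prod.collapse)
qed

lemma grz_der_identity: "grz_der grz_inf_der (\<Gamma> + {#A#}) ({#A#} + \<Delta>)"
proof (induction A arbitrary: \<Gamma> \<Delta>)
  case Bot
  show ?case by (rule grz_der.botL)
next
  case (Atom p)
  show ?case by (rule grz_der.ax)
next
  case (Imp A B)
  have "grz_der grz_inf_der (\<Gamma> + {#A#} + {#B#}) ({#B#} + \<Delta>)"
    and "grz_der grz_inf_der (\<Gamma> + {#A#}) ({#A#} + ({#B#} + \<Delta>))"
    by (fact Imp.IH)+
  then have "grz_der grz_inf_der (\<Gamma> + {#A#} + {#Imp A B#}) ({#B#} + \<Delta>)"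
    by (rule grz_der.impL)
  then show ?case
    using grz_der.impR[of grz_inf_der "\<Gamma> + {#Imp A B#}" A B \<Delta>] by (simp add: ac_simps)
next
  case (Box A)
  have "grz_der grz_inf_der ({#} + {#A#} + {#Box A#}) {#A#}"
    using Box.IH[of "{#Box A#}" "{#}"] by (simp add: ac_simps)
  then have "grz_der grz_inf_der {#Box A#} {#A#}"
    using grz_der.refl by fastforce
  then have "(image_mset Box {#A#}, {#A#}) \<in> grz_inf_der"
    by (simp add: grz_inf_der_iff)
  moreover have "grz_der grz_inf_der (\<Gamma> + image_mset Box {#A#}) ({#A#} + \<Delta>)"
    using grz_der.refl[of grz_inf_der \<Gamma> A "{#A#} + \<Delta>"] Box.IH[of "\<Gamma> + {#Box A#}" \<Delta>]
    by (simp add: ac_simps add_mset_commute)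
  ultimately show ?case
    using grz_der.box by fastforce
qed

lemma grz_inf_der_grz_rule:
  assumes "grz_der grz_inf_der (image_mset Box \<Pi> + {#Box (Imp A (Box A))#}) {#A#}"
  shows "(image_mset Box \<Pi>, {#A#}) \<in> grz_inf_der"
proof -
  let ?B\<Pi> = "image_mset Box \<Pi>"
  let ?Y = "{(?B\<Pi>, {#A#}), (?B\<Pi>, {#Imp A (Box A)#})}"
  let ?Z = "?Y \<union> grz_inf_der"
  have der_mono: "grz_der grz_inf_der \<Gamma> \<Delta> \<Longrightarrow> grz_der ?Z \<Gamma> \<Delta>" for \<Gamma> \<Delta>
    using grz_der_mono[of grz_inf_der ?Z] by blast
  have "grz_der ?Z (?B\<Pi> + {#A#}) ({#A#} + {#})"
    using der_mono grz_der_identity by blast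
  then have "grz_der ?Z (?B\<Pi> + {#A#}) ({#Box A#} + {#})"
    using grz_der.box[of ?Z "{#A#}" \<Pi> A "{#}"] by (simp add: ac_simps)
  then have imp: "grz_der ?Z ?B\<Pi> {#Imp A (Box A)#}"
    using grz_der.impR[of ?Z ?B\<Pi> A "Box A" "{#}"] by simp
  have "grz_der ?Z ?B\<Pi> ({#Imp A (Box A)#} + {#A#})"
    using grz_der_weaken[OF imp, of "{#}" "{#A#}"] by simp
  then have "grz_der ?Z ?B\<Pi> ({#Box (Imp A (Box A))#} + {#A#})"
    using grz_der.box[of ?Z "{#}" \<Pi> "Imp A (Box A)" "{#A#}"] by simp
  moreover have "grz_der ?Z (?B\<Pi> + {#Box (Imp A (Box A))#}) {#A#}"
    using der_mono assms by blast
  ultimately have "grz_der ?Z ?B\<Pi> {#A#}"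
    by (rule grz_der.cut)
  with imp have "?Y \<subseteq> grz_inf_der"
    by (intro grz_inf_der_coinduct) auto
  then show ?thesis
    by simp
qed

lemma grz_seq_imp_grz_der: "grz_seq \<Gamma> \<Delta> \<Longrightarrow> grz_der grz_inf_der \<Gamma> \<Delta>"
proof (induction rule: grz_seq.induct)
  case (ax \<Gamma> A \<Delta>)
  show ?case by (rule grz_der_identity)
next
  case (botL \<Gamma> \<Delta>)
  show ?case by (rule grz_der.botL)
next
  case (impL \<Gamma> B \<Delta> A)
  from impL.IH show ?case by (rule grz_der.impL)
next
  case (impR \<Gamma> A B \<Delta>)
  from impR.IH show ?case by (rule grz_der.impR)
next
  case (refl \<Gamma> B \<Delta>)
  from refl.IH show ?case by (rule grz_der.refl)
next
  case (cut \<Gamma> A \<Delta>)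
  from cut.IH show ?case by (rule grz_der.cut)
next
  case (boxGrz \<Pi> A \<Gamma> \<Delta>)
  from boxGrz.IH have "(image_mset Box \<Pi>, {#A#}) \<in> grz_inf_der"
    by (rule grz_inf_der_grz_rule)
  then have "grz_der grz_inf_der (image_mset Box \<Pi> + \<Gamma>) ({#A#} + \<Delta>)"
    and "(image_mset Box \<Pi>, {#A#}) \<in> grz_inf_der"
    using grz_der_weaken grz_inf_der_iff by blast+
  then show ?case
    using grz_der.box[of grz_inf_der \<Gamma> \<Pi> A \<Delta>] by (simp add: add.commute)
qed

text \<open>
  \<^term>\<open>Hyp S\<close> is a leaf discharged by the hypothesis \<^term>\<open>S\<close>; in a well-formed tree
  it occurs exactly as right premise of \<^const>\<open>RBox\<close>.  Children beyond the arity of a rule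
  are ignored, and \<^const>\<open>RAx\<close> below is a junk value.
\<close>

datatype dtree = Hyp sequent | Step rule sequent dtree dtree

fun root_seq :: "dtree \<Rightarrow> sequent" where
  "root_seq (Hyp S) = S"
| "root_seq (Step r S a b) = S"

fun root_rule :: "dtree \<Rightarrow> rule" where
  "root_rule (Hyp S) = RAx"
| "root_rule (Step r S a b) = r"

definition step_ok :: "rule \<Rightarrow> sequent \<Rightarrow> sequent \<Rightarrow> sequent \<Rightarrow> bool" where
  "step_ok r S S0 S1 \<longleftrightarrow> rule_ok (\<lambda>v. if v = [0] then S0 else if v = [1] then S1 else S) r []"

fun wf_dtree :: "sequent set \<Rightarrow> dtree \<Rightarrow> bool" where
  "wf_dtree X (Hyp S) \<longleftrightarrow> False"
| "wf_dtree X (Step r S a b) \<longleftrightarrow> step_ok r S (root_seq a) (root_seq b)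
     \<and> (0 < arity r \<longrightarrow> wf_dtree X a)
     \<and> (1 < arity r \<longrightarrow> (if r = RBox then (\<exists>S'. b = Hyp S' \<and> S' \<in> X) else wf_dtree X b))"

lemma step_ok_imp_rule_ok:
  assumes "step_ok r (lab w) (lab (w @ [0])) S1" and "arity r = 2 \<Longrightarrow> lab (w @ [1]) = S1"
  shows "rule_ok lab r w"
  using assms by (cases r) (auto simp: step_ok_def)

lemma grz_der_imp_wf_dtree: "grz_der X \<Gamma> \<Delta> \<Longrightarrow> \<exists>t. wf_dtree X t \<and> root_seq t = (\<Gamma>, \<Delta>)"
proof (induction rule: grz_der.induct)
  case (ax \<Gamma> p \<Delta>)
  show ?case
    by (rule exI[of _ "Step RAx (\<Gamma> + {#Atom p#}, {#Atom p#} + \<Delta>) (Hyp ({#}, {#})) (Hyp ({#}, {#}))"])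
       (auto simp: step_ok_def)
next
  case (botL \<Gamma> \<Delta>)
  show ?case
    by (rule exI[of _ "Step RBot (\<Gamma> + {#Bot#}, \<Delta>) (Hyp ({#}, {#})) (Hyp ({#}, {#}))"])
       (auto simp: step_ok_def)
next
  case (impL \<Gamma> B \<Delta> A)
  then obtain t0 t1 where "wf_dtree X t0" "root_seq t0 = (\<Gamma> + {#B#}, \<Delta>)"
    and "wf_dtree X t1" "root_seq t1 = (\<Gamma>, {#A#} + \<Delta>)"
    by blast
  then show ?case
    by (intro exI[of _ "Step RImpL (\<Gamma> + {#Imp A B#}, \<Delta>) t0 t1"]) (auto simp: step_ok_def)
next
  case (impR \<Gamma> A B \<Delta>)
  then obtain t0 where "wf_dtree X t0" "root_seq t0 = (\<Gamma> + {#A#}, {#B#} + \<Delta>)"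
    by blast
  then show ?case
    by (intro exI[of _ "Step RImpR (\<Gamma>, {#Imp A B#} + \<Delta>) t0 (Hyp ({#}, {#}))"])
       (auto simp: step_ok_def)
next
  case (refl \<Gamma> B \<Delta>)
  then obtain t0 where "wf_dtree X t0" "root_seq t0 = (\<Gamma> + {#B#} + {#Box B#}, \<Delta>)"
    by blast
  then show ?case
    by (intro exI[of _ "Step RRefl (\<Gamma> + {#Box B#}, \<Delta>) t0 (Hyp ({#}, {#}))"])
       (auto simp: step_ok_def)
next
  case (cut \<Gamma> A \<Delta>)
  then obtain t0 t1 where "wf_dtree X t0" "root_seq t0 = (\<Gamma>, {#A#} + \<Delta>)"
    and "wf_dtree X t1" "root_seq t1 = (\<Gamma> + {#A#}, \<Delta>)"
    by blast
  then show ?case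
    by (intro exI[of _ "Step RCut (\<Gamma>, \<Delta>) t0 t1"]) (auto simp: step_ok_def)
next
  case (box \<Gamma> \<Pi> A \<Delta>)
  then obtain t0 where "wf_dtree X t0" "root_seq t0 = (\<Gamma> + image_mset Box \<Pi>, {#A#} + \<Delta>)"
    by blast
  with box.hyps(2) show ?case
    by (intro exI[of _ "Step RBox (\<Gamma> + image_mset Box \<Pi>, {#Box A#} + \<Delta>) t0
                          (Hyp (image_mset Box \<Pi>, {#A#}))"])
       (auto simp: step_ok_def)
qed

fun unfold_child :: "(sequent \<Rightarrow> dtree) \<Rightarrow> dtree \<Rightarrow> nat \<Rightarrow> dtree" where
  "unfold_child c (Step r S a b) i = (if i = 0 then a else case b of Hyp S' \<Rightarrow> c S' | _ \<Rightarrow> b)"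
| "unfold_child c (Hyp S) i = Hyp S"

lemma branch_in_nodes: "is_branch rl f \<Longrightarrow> f n \<in> nodes rl"
proof (induction n)
  case 0
  then show ?case by (simp add: is_branch_def nodes.root)
next
  case (Suc n)
  then show ?case by (metis is_branch_def nodes.child)
qed

locale dtree_unfolding =
  fixes X :: "sequent set" and c :: "sequent \<Rightarrow> dtree" and t :: dtree
  assumes wf_hyp_tree: "S \<in> X \<Longrightarrow> wf_dtree X (c S) \<and> root_seq (c S) = S"
    and wf_root_tree: "wf_dtree X t"
begin

definition subtree :: "nat list \<Rightarrow> dtree" where
  "subtree w = foldl (unfold_child c) t w"

definition lab :: "nat list \<Rightarrow> sequent" where
  "lab w = root_seq (subtree w)"

definition rl :: "nat list \<Rightarrow> rule" where
  "rl w = root_rule (subtree w)"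

lemma subtree_Nil: "subtree [] = t"
  by (simp add: subtree_def)

lemma subtree_snoc: "subtree (w @ [i]) = unfold_child c (subtree w) i"
  by (simp add: subtree_def)

lemma wf_subtree: "w \<in> nodes rl \<Longrightarrow> wf_dtree X (subtree w)"
proof (induction rule: nodes.induct)
  case root
  then show ?case by (simp add: subtree_Nil wf_root_tree)
next
  case (child w i)
  obtain r S a b where sw: "subtree w = Step r S a b"
    using child.IH by (cases "subtree w") auto
  have "i < arity r"
    using child.hyps sw by (simp add: rl_def)
  then show ?case
    using child.IH sw wf_hyp_tree by (cases b) (auto simp: subtree_snoc split: if_splits)
qed

lemma rule_ok_subtree: "w \<in> nodes rl \<Longrightarrow> rule_ok lab (rl w) w"
proof -
  assume "w \<in> nodes rl"
  then obtain r S a b where sw: "subtree w = Step r S a b" and wf: "wf_dtree X (Step r S a b)"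
    using wf_subtree by (cases "subtree w") fastforce+
  show ?thesis
  proof (rule step_ok_imp_rule_ok[of _ _ _ "root_seq b"])
    show "step_ok (rl w) (lab w) (lab (w @ [0])) (root_seq b)"
      using wf sw by (simp add: lab_def rl_def subtree_snoc)
  next
    assume "arity (rl w) = 2"
    then show "lab (w @ [1]) = root_seq b"
      using wf sw wf_hyp_tree by (cases b) (auto simp: lab_def rl_def subtree_snoc split: if_splits)
  qed
qed

lemma size_subtree_child_less:
  assumes "w \<in> nodes rl" "i < arity (rl w)" "\<not> (rl w = RBox \<and> i = 1)"
  shows "size (subtree (w @ [i])) < size (subtree w)"
proof -
  obtain r S a b where sw: "subtree w = Step r S a b" and wf: "wf_dtree X (Step r S a b)"
    using wf_subtree[OF assms(1)] by (cases "subtree w") fastforce+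
  have "i < arity r" "\<not> (r = RBox \<and> i = 1)"
    using assms(2,3) sw by (simp_all add: rl_def)
  moreover have "arity r \<le> 2"
    by (cases r) simp_all
  ultimately show ?thesis
    using wf sw by (cases b) (auto simp: subtree_snoc)
qed

lemma branch_box_right_frequently:
  assumes "is_branch rl f"
  shows "\<exists>n\<ge>m. rl (f n) = RBox \<and> f (Suc n) = f n @ [1]"
proof (rule ccontr)
  assume "\<not> ?thesis"
  then have "(subtree (f (m + Suc k)), subtree (f (m + k))) \<in> measure size" for k
    using assms branch_in_nodes[OF assms] size_subtree_child_less unfolding is_branch_def
    by (metis add_Suc_right in_measure le_add1)
  then show False
    using wf_no_infinite_down_chainE[OF wf_measure, of "\<lambda>k. subtree (f (m + k))" size]
    by blast
qed

lemma inf_proof_unfolding: "inf_proof lab rl"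
  unfolding inf_proof_def using rule_ok_subtree branch_box_right_frequently by blast

end

lemma grz_inf_provable_if_grz_inf_der:
  assumes "S \<in> grz_inf_der"
  shows "grz_inf_provable S"
proof -
  have trees: "\<exists>t. wf_dtree grz_inf_der t \<and> root_seq t = S'" if "S' \<in> grz_inf_der" for S'
    using that grz_der_imp_wf_dtree grz_inf_der_iff by (metis prod.collapse)
  define c where "c S' = (SOME t. wf_dtree grz_inf_der t \<and> root_seq t = S')" for S'
  have c: "wf_dtree grz_inf_der (c S') \<and> root_seq (c S') = S'" if "S' \<in> grz_inf_der" for S'
    unfolding c_def using someI_ex[OF trees[OF that]] .
  interpret dtree_unfolding grz_inf_der c "c S"
    using c assms by unfold_locales blast+
  have "lab [] = S"
    using c assms by (simp add: lab_def subtree_Nil)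
  with inf_proof_unfolding show ?thesis
    unfolding grz_inf_provable_def by blast
qed

theorem theorem3p4:
  fixes \<Gamma> \<Delta> :: "fm multiset"
  assumes "grz_seq \<Gamma> \<Delta>"
  shows "grz_inf_provable (\<Gamma>, \<Delta>)"
proof -
  from assms have "grz_der grz_inf_der \<Gamma> \<Delta>"
    by (rule grz_seq_imp_grz_der)
  then have "(\<Gamma>, \<Delta>) \<in> grz_inf_der"
    by (simp add: grz_inf_der_iff)
  then show ?thesis
    by (rule grz_inf_provable_if_grz_inf_der)
qed

end
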